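(* Let $a,b\ge0$ and let $w\in\tilde S_3$ be the affine Grassmannian element with $\lambda(w)=(2^a1^b)$. Then the number of reduced words of $w$ is $|R(w)|=\binom{\lfloor b/2+a\rfloor}{a}$.
   Context: $\tilde S_3$ is realized as bijections $w:\mathbb Z\to\mathbb Z$ with $w(i+3)=w(i)+3$, $w(1)+w(2)+w(3)=6$, generated by $s_0,s_1,s_2$; $R(w)$ is its set of reduced words. $w$ is affine Grassmannian if $w(1)<w(2)<w(3)$. The code $c(u)=(c_1,c_2,c_3)$, $c_i=\#\{j\in\mathbb Z:j>i,u(j)<u(i)\}$; $\lambda(w)$ is the partition conjugate to the decreasing rearrangement of $c(w^{-1})$; $w\mapsto\lambda(w)$ is a bijection from affine Grassmannian elements to partitions with all parts $<3$. *)

theory Defs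
  imports Complex_Main
begin

definition affine_perm3 :: "(int \<Rightarrow> int) \<Rightarrow> bool" where
  "affine_perm3 w \<longleftrightarrow> bij w \<and> (\<forall>i. w (i + 3) = w i + 3) \<and> w 1 + w 2 + w 3 = 6"

definition sref :: "nat \<Rightarrow> int \<Rightarrow> int" where
  "sref i j = (if j mod 3 = int i mod 3 then j + 1
               else if j mod 3 = (int i + 1) mod 3 then j - 1 else j)"

definition word_prod :: "nat list \<Rightarrow> int \<Rightarrow> int" where
  "word_prod ws = foldr (\<lambda>i f. sref i \<circ> f) ws id"

definition is_word :: "nat list \<Rightarrow> bool" where
  "is_word ws \<longleftrightarrow> set ws \<subseteq> {0, 1, 2}"

definition affine_length :: "(int \<Rightarrow> int) \<Rightarrow> nat" where
  "affine_length w = (LEAST n. \<exists>ws. is_word ws \<and> length ws = n \<and> word_prod ws = w)"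

definition reduced_words :: "(int \<Rightarrow> int) \<Rightarrow> nat list set" where
  "reduced_words w = {ws. is_word ws \<and> word_prod ws = w \<and> length ws = affine_length w}"

definition affine_grassmannian :: "(int \<Rightarrow> int) \<Rightarrow> bool" where
  "affine_grassmannian w \<longleftrightarrow> w 1 < w 2 \<and> w 2 < w 3"

definition code3 :: "(int \<Rightarrow> int) \<Rightarrow> nat list" where
  "code3 u = map (\<lambda>i. card {j::int. j > i \<and> u j < u i}) [1, 2, 3]"

text \<open>Conjugate of a partition (given as a list of naturals; zero parts ignored).\<close>
definition conj_part :: "nat list \<Rightarrow> nat list" where
  "conj_part mu = map (\<lambda>k. length (filter (\<lambda>x. k \<le> x) mu)) [1..<Suc (Max (set (0 # mu)))]"

definition lam :: "(int \<Rightarrow> int) \<Rightarrow> nat list" where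
  "lam w = conj_part (rev (sort (code3 (inv w))))"

end

theory Submission
  imports Defs
begin

text \<open>
  An affine permutation w is determined by its window (w 1, w 2, w 3), and a simple reflection
  s_k acts on the window entrywise, swapping the residue classes k and k+1 mod 3.  The quantity
  window_length, the sum of the absolute quotients (xj - xi) div 3 over pairs of window entries,
  changes by at most one under each s_k, so it is a lower bound for the length of any word.

  Counting words of a prescribed length is done by removing the first letter: the words of
  length m+1 for f are the words of length m for s_k f, for the three letters k.  For the
  explicit windows grass_window a b this recursion, together with the lower bound that kills
  the non-descents, gives Pascal's recursion and hence the count (b div 2 + a choose a) of words
  of length 2a + b; in particular 2a + b is the length and these are the reduced words.

  Finally, computing the code of w^{-1} for a Grassmannian window identifies lambda(w), and
  shows that the element with lambda(w) = (2^a 1^b) is exactly grass_window a b.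
\<close>

section \<open>Windows of 3-periodic functions\<close>

text \<open>A function with f(i+3) = f(i)+3 is determined by its window (f 1, f 2, f 3).\<close>
definition window :: "int \<Rightarrow> int \<Rightarrow> int \<Rightarrow> int \<Rightarrow> int" where
  "window x1 x2 x3 j =
     (if (j - 1) mod 3 = 0 then x1 else if (j - 1) mod 3 = 1 then x2 else x3) + 3 * ((j - 1) div 3)"

lemma window_apply [simp]: "window x1 x2 x3 1 = x1" "window x1 x2 x3 2 = x2" "window x1 x2 x3 3 = x3"
  by (simp_all add: window_def)

lemma window_id: "window 1 2 3 = id"
proof
  fix j :: int
  show "window 1 2 3 j = id j" unfolding window_def by simp presburger
qed

lemma periodic_add_multiple:
  assumes per: "\<forall>i. f (i + 3) = f i + (3::int)"
  shows "f (i + 3 * m) = f i + 3 * m"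
proof -
  have up: "f (i + 3 * int n) = f i + 3 * int n" for n i
  proof (induction n)
    case (Suc n)
    have "f (i + 3 * int (Suc n)) = f ((i + 3 * int n) + 3)" by (simp add: algebra_simps)
    also have "\<dots> = f i + 3 * int (Suc n)" using per Suc by simp
    finally show ?case .
  qed simp
  show ?thesis
  proof (cases "m \<ge> 0")
    case True
    then show ?thesis using up[of i "nat m"] by simp
  next
    case False
    then show ?thesis using up[of "i + 3 * m" "nat (- m)"] by simp
  qed
qed

lemma periodic_eq_window:
  assumes per: "\<forall>i. f (i + 3) = f i + (3::int)"
  shows "f = window (f 1) (f 2) (f 3)"
proof
  fix j :: int
  have "f j = f ((j - 1) mod 3 + 1) + 3 * ((j - 1) div 3)"
    using periodic_add_multiple[OF per, of "(j - 1) mod 3 + 1" "(j - 1) div 3"] by simp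
  moreover have "(j - 1) mod 3 = 0 \<or> (j - 1) mod 3 = 1 \<or> (j - 1) mod 3 = 2" by presburger
  ultimately show "f j = window (f 1) (f 2) (f 3) j" unfolding window_def by auto
qed

text \<open>Simple reflections commute with translation by 3, hence act entrywise on windows.\<close>
lemma sref_add_multiple: "sref k (x + 3 * q) = sref k x + 3 * q"
  unfolding sref_def by auto

lemma sref_comp_window: "sref k \<circ> window x1 x2 x3 = window (sref k x1) (sref k x2) (sref k x3)"
  by (rule ext) (simp add: window_def sref_add_multiple)

lemma word_prod_Nil [simp]: "word_prod [] = id"
  by (simp add: word_prod_def)

lemma word_prod_Cons [simp]: "word_prod (k # ws) = sref k \<circ> word_prod ws"
  by (simp add: word_prod_def)

section \<open>A length function bounding the Coxeter length\<close>

text \<open>For a window with pairwise distinct residues mod 3 this counts the inversions: each pair of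
  entries contributes the absolute quotient of its difference by 3.\<close>
definition window_length :: "int \<Rightarrow> int \<Rightarrow> int \<Rightarrow> nat" where
  "window_length x1 x2 x3 =
     nat \<bar>(x2 - x1) div 3\<bar> + nat \<bar>(x3 - x1) div 3\<bar> + nat \<bar>(x3 - x2) div 3\<bar>"

definition distinct_residues :: "int \<Rightarrow> int \<Rightarrow> int \<Rightarrow> bool" where
  "distinct_residues x1 x2 x3 \<longleftrightarrow> x1 mod 3 \<noteq> x2 mod 3 \<and> x1 mod 3 \<noteq> x3 mod 3 \<and> x2 mod 3 \<noteq> x3 mod 3"

lemma mod3_cases: "(x::int) mod 3 \<in> {0, 1, 2}"
  by auto

text \<open>The reflection s_k moves residue k up by one and residue k+1 down by one.\<close>
definition residue_shift :: "int \<Rightarrow> int \<Rightarrow> int" where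
  "residue_shift r \<rho> = (if r = \<rho> then 1 else if r = (\<rho> + 1) mod 3 then -1 else 0)"

lemma sref_eq_residue_shift: "sref k x = x + residue_shift (x mod 3) (int k mod 3)"
  unfolding sref_def residue_shift_def by (simp add: mod_add_left_eq)

lemma sref_mod: "sref k x mod 3 = (x mod 3 + residue_shift (x mod 3) (int k mod 3)) mod 3"
  unfolding sref_eq_residue_shift by (simp add: mod_add_left_eq)

lemma distinct_residues_sref:
  assumes "distinct_residues x1 x2 x3"
  shows "distinct_residues (sref k x1) (sref k x2) (sref k x3)"
proof -
  have perm: "(r + residue_shift r \<rho>) mod 3 \<noteq> (s + residue_shift s \<rho>) mod 3"
    if "r \<in> {0, 1, 2}" "s \<in> {0, 1, 2}" "\<rho> \<in> {0, 1, 2}" "r \<noteq> s" for r s \<rho> :: int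
    using that by (elim insertE emptyE; simp add: residue_shift_def)
  show ?thesis
    using assms perm[OF mod3_cases mod3_cases mod3_cases] unfolding distinct_residues_def sref_mod
    by blast
qed

lemma sref_involution: "sref k (sref k x) = x"
proof -
  have cancel: "residue_shift r \<rho> + residue_shift ((r + residue_shift r \<rho>) mod 3) \<rho> = 0"
    if "r \<in> {0, 1, 2}" "\<rho> \<in> {0, 1, 2}" for r \<rho> :: int
    using that by (elim insertE emptyE; simp add: residue_shift_def)
  show ?thesis
    using cancel[OF mod3_cases mod3_cases, of x "int k"]
    by (simp add: sref_eq_residue_shift mod_add_left_eq)
qed

text \<open>Change of the quotient of a pair of entries under s_k: only the pair with residues
  (k, k+1) changes, by one.\<close>
definition pair_shift :: "int \<Rightarrow> int \<Rightarrow> int \<Rightarrow> int" where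
  "pair_shift r s \<rho> =
     (if r = \<rho> \<and> s = (\<rho> + 1) mod 3 then -1 else if s = \<rho> \<and> r = (\<rho> + 1) mod 3 then 1 else 0)"

lemma div3_split: "(y - x + d) div 3 = (y div 3 - x div 3) + (y mod 3 - x mod 3 + d) div (3::int)"
proof -
  have "y - x + d = (y mod 3 - x mod 3 + d) + 3 * (y div 3 - x div 3)"
    by (simp add: algebra_simps)
  then show ?thesis by (metis div_mult_self2 zero_neq_numeral)
qed

lemma pair_quotient_sref:
  assumes ne: "x mod 3 \<noteq> y mod 3"
  shows "(sref k y - sref k x) div 3 = (y - x) div 3 + pair_shift (x mod 3) (y mod 3) (int k mod 3)"
proof -
  have small: "(s - r + (residue_shift s \<rho> - residue_shift r \<rho>)) div 3 = (s - r) div 3 + pair_shift r s \<rho>"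
    if "r \<in> {0, 1, 2}" "s \<in> {0, 1, 2}" "\<rho> \<in> {0, 1, 2}" "r \<noteq> s" for r s \<rho> :: int
    using that by (elim insertE emptyE; simp add: residue_shift_def pair_shift_def)
  define \<delta> where "\<delta> = residue_shift (y mod 3) (int k mod 3) - residue_shift (x mod 3) (int k mod 3)"
  have "(sref k y - sref k x) div 3 = (y - x + \<delta>) div 3"
    unfolding \<delta>_def by (simp add: sref_eq_residue_shift algebra_simps)
  also have "\<dots> = (y div 3 - x div 3) + (y mod 3 - x mod 3 + \<delta>) div 3"
    by (rule div3_split)
  also have "(y mod 3 - x mod 3 + \<delta>) div 3 = (y mod 3 - x mod 3) div 3 + pair_shift (x mod 3) (y mod 3) (int k mod 3)"
    unfolding \<delta>_def by (rule small[OF mod3_cases mod3_cases mod3_cases ne])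
  also have "(y div 3 - x div 3) + ((y mod 3 - x mod 3) div 3 + pair_shift (x mod 3) (y mod 3) (int k mod 3))
      = (y - x) div 3 + pair_shift (x mod 3) (y mod 3) (int k mod 3)"
    using div3_split[of y x 0] by simp
  finally show ?thesis .
qed

lemma pair_shift_bound: "\<bar>pair_shift r s \<rho>\<bar> \<le> 1"
  by (simp add: pair_shift_def)

lemma pair_shift_nonzero: "pair_shift r s \<rho> \<noteq> 0 \<Longrightarrow> {r, s} = {\<rho>, (\<rho> + 1) mod 3}"
  by (auto simp: pair_shift_def split: if_splits)

lemma pair_shift_at_most_one:
  assumes "r1 \<noteq> r2" "r1 \<noteq> r3" "r2 \<noteq> r3"
  shows "(pair_shift r1 r3 \<rho> = 0 \<and> pair_shift r2 r3 \<rho> = 0) \<or>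
         (pair_shift r1 r2 \<rho> = 0 \<and> pair_shift r2 r3 \<rho> = 0) \<or>
         (pair_shift r1 r2 \<rho> = 0 \<and> pair_shift r1 r3 \<rho> = 0)"
  using assms pair_shift_nonzero[of _ _ \<rho>] by (metis doubleton_eq_iff)

lemma nat_abs_add_le: "\<bar>c\<bar> \<le> 1 \<Longrightarrow> nat \<bar>d + c\<bar> \<le> nat \<bar>d\<bar> + (1::nat)"
  by arith

lemma window_length_sref:
  assumes "distinct_residues x1 x2 x3"
  shows "window_length (sref k x1) (sref k x2) (sref k x3) \<le> window_length x1 x2 x3 + 1"
proof -
  have n: "x1 mod 3 \<noteq> x2 mod 3" "x1 mod 3 \<noteq> x3 mod 3" "x2 mod 3 \<noteq> x3 mod 3"
    using assms distinct_residues_def by auto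
  define c where "c r s = pair_shift r s (int k mod 3)" for r s
  have "(c (x1 mod 3) (x3 mod 3) = 0 \<and> c (x2 mod 3) (x3 mod 3) = 0) \<or>
        (c (x1 mod 3) (x2 mod 3) = 0 \<and> c (x2 mod 3) (x3 mod 3) = 0) \<or>
        (c (x1 mod 3) (x2 mod 3) = 0 \<and> c (x1 mod 3) (x3 mod 3) = 0)"
    unfolding c_def using pair_shift_at_most_one[OF n] .
  then show ?thesis
    unfolding window_length_def pair_quotient_sref[OF n(1)] pair_quotient_sref[OF n(2)]
      pair_quotient_sref[OF n(3)] c_def[symmetric]
    using nat_abs_add_le[OF pair_shift_bound[of "x1 mod 3" "x2 mod 3" "int k mod 3", folded c_def]]
      nat_abs_add_le[OF pair_shift_bound[of "x1 mod 3" "x3 mod 3" "int k mod 3", folded c_def]]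
      nat_abs_add_le[OF pair_shift_bound[of "x2 mod 3" "x3 mod 3" "int k mod 3", folded c_def]]
    by auto
qed

definition len :: "(int \<Rightarrow> int) \<Rightarrow> nat" where
  "len f = window_length (f 1) (f 2) (f 3)"

lemma len_window [simp]: "len (window x1 x2 x3) = window_length x1 x2 x3"
  by (simp add: len_def)

lemma distinct_residues_word_prod:
  "distinct_residues (word_prod ws 1) (word_prod ws 2) (word_prod ws 3)"
proof (induction ws)
  case (Cons k ws)
  then show ?case using distinct_residues_sref by simp
qed (simp add: distinct_residues_def)

lemma len_word_prod: "len (word_prod ws) \<le> length ws"
proof (induction ws)
  case Nil
  then show ?case by (simp add: len_def window_length_def)
next
  case (Cons k ws)
  then show ?case
    using window_length_sref[OF distinct_residues_word_prod[of ws], of k] by (simp add: len_def)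
qed

section \<open>Counting words of a given length\<close>

definition words_of :: "(int \<Rightarrow> int) \<Rightarrow> nat \<Rightarrow> nat list set" where
  "words_of f n = {ws. is_word ws \<and> word_prod ws = f \<and> length ws = n}"

lemma finite_words_of: "finite (words_of f n)"
proof -
  have "words_of f n \<subseteq> {ws. set ws \<subseteq> {0, 1, 2} \<and> length ws = n}"
    unfolding words_of_def is_word_def by auto
  then show ?thesis using finite_lists_length_eq[of "{0, 1, 2::nat}" n] finite_subset by blast
qed

lemma words_of_empty: "n < len f \<Longrightarrow> words_of f n = {}"
  using len_word_prod unfolding words_of_def by (metis (mono_tags, lifting) empty_Collect_eq leD)

lemma card_words_of_too_short: "m < len f \<Longrightarrow> card (words_of f m) = 0"
  by (simp add: words_of_empty)

lemma words_of_id_0: "words_of id 0 = {[]}"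
  unfolding words_of_def is_word_def by auto

lemma words_of_Suc: "words_of f (Suc n) = (\<Union>k\<in>{0, 1, 2}. Cons k ` words_of (sref k \<circ> f) n)"
proof
  show "words_of f (Suc n) \<subseteq> (\<Union>k\<in>{0, 1, 2}. Cons k ` words_of (sref k \<circ> f) n)"
  proof
    fix ws assume "ws \<in> words_of f (Suc n)"
    then obtain k ws' where ws: "ws = k # ws'" "k \<in> {0, 1, 2}" "is_word ws'" "length ws' = n"
        and prod: "sref k \<circ> word_prod ws' = f"
      unfolding words_of_def is_word_def by (cases ws) auto
    from prod have "word_prod ws' = sref k \<circ> f"
      by (auto simp: sref_involution)
    then show "ws \<in> (\<Union>k\<in>{0, 1, 2}. Cons k ` words_of (sref k \<circ> f) n)"
      using ws unfolding words_of_def by blast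
  qed
  show "(\<Union>k\<in>{0, 1, 2}. Cons k ` words_of (sref k \<circ> f) n) \<subseteq> words_of f (Suc n)"
    unfolding words_of_def is_word_def by (auto simp: sref_involution)
qed

lemma card_words_of_Suc:
  "card (words_of f (Suc n)) = (\<Sum>k\<in>{0, 1, 2::nat}. card (words_of (sref k \<circ> f) n))"
proof -
  have "card (\<Union>k\<in>{0, 1, 2}. Cons k ` words_of (sref k \<circ> f) n)
      = (\<Sum>k\<in>{0, 1, 2::nat}. card (Cons k ` words_of (sref k \<circ> f) n))"
    by (rule card_UN_disjoint) (auto simp: finite_words_of)
  also have "\<dots> = (\<Sum>k\<in>{0, 1, 2::nat}. card (words_of (sref k \<circ> f) n))"
    by (rule sum.cong) (auto simp: card_image)
  finally show ?thesis by (simp only: words_of_Suc)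
qed

section \<open>Left multiplication on windows with cyclically ordered residues\<close>

definition cyclic_residues :: "int \<Rightarrow> int \<Rightarrow> int \<Rightarrow> bool" where
  "cyclic_residues x y z \<longleftrightarrow> 3 dvd (y - x - 1) \<and> 3 dvd (z - x - 2)"

lemma cyclic_residuesI: "y = x + 1 + 3 * p \<Longrightarrow> z = x + 2 + 3 * q \<Longrightarrow> cyclic_residues x y z"
  unfolding cyclic_residues_def by simp

lemma cyclic_residues_rotate: "cyclic_residues x y z \<Longrightarrow> cyclic_residues y z x"
  unfolding cyclic_residues_def by presburger

lemma cyclic_residues_distinct: "cyclic_residues x y z \<Longrightarrow> distinct_residues x y z"
  unfolding cyclic_residues_def distinct_residues_def mod_eq_dvd_iff by presburger

lemma sref_residue:
  "sref (nat (x mod 3)) x = x + 1" "sref (nat (x mod 3)) (x + 1) = x" "sref (nat (x mod 3)) (x + 2) = x + 2"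
proof -
  have k: "int (nat (x mod 3)) = x mod 3" by simp
  have "(x + 1) mod 3 = (x mod 3 + 1) mod 3" "(x + 2) mod 3 = (x mod 3 + 2) mod 3"
    by (simp_all add: mod_add_left_eq)
  then show "sref (nat (x mod 3)) x = x + 1" "sref (nat (x mod 3)) (x + 1) = x"
      "sref (nat (x mod 3)) (x + 2) = x + 2"
    unfolding sref_def k using mod3_cases[of x] by auto
qed

lemma sref_cyclic:
  assumes "cyclic_residues x y z"
  shows "sref (nat (x mod 3)) x = x + 1" "sref (nat (x mod 3)) y = y - 1" "sref (nat (x mod 3)) z = z"
proof -
  from assms obtain p q where "y - x - 1 = 3 * p" and "z - x - 2 = 3 * q"
    unfolding cyclic_residues_def by (auto elim!: dvdE)
  then have y: "y = (x + 1) + 3 * p" and z: "z = (x + 2) + 3 * q"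
    by simp_all
  show "sref (nat (x mod 3)) x = x + 1" "sref (nat (x mod 3)) y = y - 1" "sref (nat (x mod 3)) z = z"
    unfolding y z sref_add_multiple sref_residue by simp_all
qed

lemma sum_letters_by_residues:
  assumes "distinct_residues x1 x2 x3"
  shows "(\<Sum>k\<in>{0, 1, 2::nat}. g k) = g (nat (x1 mod 3)) + g (nat (x2 mod 3)) + g (nat (x3 mod 3))"
proof -
  let ?r = "\<lambda>x. nat (x mod 3)"
  have ne: "?r x1 \<noteq> ?r x2" "?r x1 \<noteq> ?r x3" "?r x2 \<noteq> ?r x3"
    using assms unfolding distinct_residues_def by (simp_all add: nat_eq_iff)
  have "{?r x1, ?r x2, ?r x3} \<subseteq> {0, 1, 2}"
    using mod3_cases[of x1] mod3_cases[of x2] mod3_cases[of x3] by auto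
  moreover have "card {?r x1, ?r x2, ?r x3} = card {0, 1, 2::nat}"
    using ne by simp
  ultimately have "{?r x1, ?r x2, ?r x3} = {0, 1, 2}"
    by (intro card_subset_eq) auto
  then have "(\<Sum>k\<in>{0, 1, 2::nat}. g k) = (\<Sum>k\<in>{?r x1, ?r x2, ?r x3}. g k)"
    by simp
  also have "\<dots> = g (?r x1) + g (?r x2) + g (?r x3)"
    using ne by (simp add: add.assoc)
  finally show ?thesis .
qed

lemma card_words_of_Suc_residues:
  assumes "distinct_residues (f 1) (f 2) (f 3)"
  shows "card (words_of f (Suc m)) = card (words_of (sref (nat (f 1 mod 3)) \<circ> f) m)
    + card (words_of (sref (nat (f 2 mod 3)) \<circ> f) m) + card (words_of (sref (nat (f 3 mod 3)) \<circ> f) m)"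
  unfolding card_words_of_Suc by (rule sum_letters_by_residues[OF assms])

lemma card_words_of_Suc_cyclic:
  assumes "cyclic_residues x1 x2 x3"
  shows "card (words_of (window x1 x2 x3) (Suc m)) =
    card (words_of (window (x1 + 1) (x2 - 1) x3) m) + card (words_of (window x1 (x2 + 1) (x3 - 1)) m)
    + card (words_of (window (x1 - 1) x2 (x3 + 1)) m)"
proof -
  note c2 = cyclic_residues_rotate[OF assms]
  note c3 = cyclic_residues_rotate[OF c2]
  show ?thesis
    using card_words_of_Suc_residues[of "window x1 x2 x3"] cyclic_residues_distinct[OF assms]
    unfolding sref_comp_window window_apply sref_cyclic[OF assms] sref_cyclic[OF c2] sref_cyclic[OF c3]
    by simp
qed

lemma card_words_of_Suc_anticyclic:
  assumes "cyclic_residues x1 x3 x2"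
  shows "card (words_of (window x1 x2 x3) (Suc m)) =
    card (words_of (window (x1 + 1) x2 (x3 - 1)) m) + card (words_of (window (x1 - 1) (x2 + 1) x3) m)
    + card (words_of (window x1 (x2 - 1) (x3 + 1)) m)"
proof -
  note c2 = cyclic_residues_rotate[OF assms]
  note c3 = cyclic_residues_rotate[OF c2]
  have d: "distinct_residues x1 x2 x3"
    using cyclic_residues_distinct[OF assms] unfolding distinct_residues_def by auto
  show ?thesis
    using card_words_of_Suc_residues[of "window x1 x2 x3"] d
    unfolding sref_comp_window window_apply sref_cyclic[OF assms] sref_cyclic[OF c2] sref_cyclic[OF c3]
    by (simp add: add_ac)
qed

section \<open>The Grassmannian elements with shape (2^a 1^b)\<close>

text \<open>The candidate window for the affine Grassmannian element of shape (2^a 1^b); it is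
  increasing with entry sum 6 and window length 2a + b.\<close>
definition grass_window :: "nat \<Rightarrow> nat \<Rightarrow> int \<Rightarrow> int" where
  "grass_window a b =
     window (1 - int a - int b) (2 - int a + int (b div 2)) (3 + 2 * int a + int ((b + 1) div 2))"

lemma grass_window_0_0: "grass_window 0 0 = id"
  by (simp add: grass_window_def window_id)

lemma len_grass_window: "len (grass_window a b) = 2 * a + b"
proof (cases "even b")
  case True
  then obtain c where "b = 2 * c" by blast
  then show ?thesis by (simp add: grass_window_def window_length_def algebra_simps)
next
  case False
  then obtain c where "b = 2 * c + 1" using oddE by blast
  then show ?thesis by (simp add: grass_window_def window_length_def algebra_simps)
qed

lemma card_words_grass_window_even:
  assumes m: "2 * a + 2 * c = Suc m"
  shows "card (words_of (grass_window a (2 * c)) (Suc m)) =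
    (if c = 0 then 0 else card (words_of (grass_window a (2 * c - 1)) m)) +
    (if a = 0 then 0 else card (words_of (grass_window (a - 1) (2 * c + 1)) m))"
proof -
  define x1 x2 x3 where "x1 = 1 - int a - 2 * int c" and "x2 = 2 - int a + int c"
    and "x3 = 3 + 2 * int a + int c"
  have window: "grass_window a (2 * c) = window x1 x2 x3"
    unfolding grass_window_def x1_def x2_def x3_def by simp
  have "cyclic_residues x1 x2 x3"
    by (rule cyclic_residuesI[of _ _ "int c" _ "int a + int c"]) (simp_all add: x1_def x2_def x3_def)
  note rec = card_words_of_Suc_cyclic[OF this, of m]
  have first: "card (words_of (window (x1 + 1) (x2 - 1) x3) m) =
      (if c = 0 then 0 else card (words_of (grass_window a (2 * c - 1)) m))"
  proof (cases "c = 0")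
    case True
    then have "m < len (window (x1 + 1) (x2 - 1) x3)"
      using m by (simp add: x1_def x2_def x3_def window_length_def)
    then show ?thesis using True by (simp add: card_words_of_too_short)
  next
    case False
    then have "(2 * c - 1) div 2 = c - 1" "(2 * c - 1 + 1) div 2 = c"
      by presburger+
    then have "window (x1 + 1) (x2 - 1) x3 = grass_window a (2 * c - 1)"
      using False by (simp add: grass_window_def x1_def x2_def x3_def)
    then show ?thesis using False by simp
  qed
  have second: "card (words_of (window x1 (x2 + 1) (x3 - 1)) m) =
      (if a = 0 then 0 else card (words_of (grass_window (a - 1) (2 * c + 1)) m))"
  proof (cases "a = 0")
    case True
    then have "m < len (window x1 (x2 + 1) (x3 - 1))"
      using m by (simp add: x1_def x2_def x3_def window_length_def)
    then show ?thesis using True by (simp add: card_words_of_too_short)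
  next
    case False
    then have "window x1 (x2 + 1) (x3 - 1) = grass_window (a - 1) (2 * c + 1)"
      by (simp add: grass_window_def x1_def x2_def x3_def algebra_simps)
    then show ?thesis using False by simp
  qed
  have "window (x1 - 1) x2 (x3 + 1) = grass_window a (2 * c + 1)"
    by (simp add: grass_window_def x1_def x2_def x3_def algebra_simps)
  then have third: "card (words_of (window (x1 - 1) x2 (x3 + 1)) m) = 0"
    using m len_grass_window[of a "2 * c + 1"] by (simp add: card_words_of_too_short)
  show ?thesis unfolding window rec first second third by simp
qed

lemma card_words_grass_window_odd:
  "card (words_of (grass_window a (2 * c + 1)) (Suc (2 * a + 2 * c))) =
   card (words_of (grass_window a (2 * c)) (2 * a + 2 * c))"
proof -
  define m where "m = 2 * a + 2 * c"
  define x1 x2 x3 where "x1 = - int a - 2 * int c" and "x2 = 2 - int a + int c"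
    and "x3 = 4 + 2 * int a + int c"
  have window: "grass_window a (2 * c + 1) = window x1 x2 x3"
    unfolding grass_window_def x1_def x2_def x3_def by (simp add: algebra_simps)
  have "cyclic_residues x1 x3 x2"
    by (rule cyclic_residuesI[of _ _ "int a + int c + 1" _ "int c"]) (simp_all add: x1_def x2_def x3_def)
  note rec = card_words_of_Suc_anticyclic[OF this, of m]
  have "window (x1 + 1) x2 (x3 - 1) = grass_window a (2 * c)"
    by (simp add: grass_window_def x1_def x2_def x3_def algebra_simps)
  moreover have "card (words_of (window (x1 - 1) (x2 + 1) x3) m) = 0"
    by (rule card_words_of_too_short) (simp add: x1_def x2_def x3_def m_def window_length_def algebra_simps)
  moreover have "card (words_of (window x1 (x2 - 1) (x3 + 1)) m) = 0"
    by (rule card_words_of_too_short) (simp add: x1_def x2_def x3_def m_def window_length_def algebra_simps)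
  ultimately show ?thesis unfolding window m_def[symmetric] rec by simp
qed

lemma card_words_grass_window: "card (words_of (grass_window a b) (2 * a + b)) = (b div 2 + a) choose a"
proof (induction "2 * a + b" arbitrary: a b rule: less_induct)
  case less
  show ?case
  proof (cases "even b")
    case False
    then obtain c where b: "b = 2 * c + 1" by (rule oddE)
    then show ?thesis using card_words_grass_window_odd[of a c] less[of a "2 * c"] by simp
  next
    case True
    then obtain c where b: "b = 2 * c" by (rule evenE)
    show ?thesis
    proof (cases "a + c = 0")
      case True
      then show ?thesis using b by (simp add: grass_window_0_0 words_of_id_0)
    next
      case False
      then obtain m where m: "2 * a + 2 * c = Suc m" by (cases "2 * a + 2 * c") auto
      have first: "(if c = 0 then 0 else card (words_of (grass_window a (2 * c - 1)) m)) =
          (if c = 0 then 0 else (c - 1 + a) choose a)"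
      proof (cases "c = 0")
        case False
        then have "m = 2 * a + (2 * c - 1)" "(2 * c - 1) div 2 = c - 1"
          using m by presburger+
        then show ?thesis using less[of a "2 * c - 1"] b False by simp
      qed simp
      have second: "(if a = 0 then 0 else card (words_of (grass_window (a - 1) (2 * c + 1)) m)) =
          (if a = 0 then 0 else (c + (a - 1)) choose (a - 1))"
      proof (cases "a = 0")
        case False
        then have "m = 2 * (a - 1) + (2 * c + 1)"
          using m by simp
        then show ?thesis using less[of "a - 1" "2 * c + 1"] b False by simp
      qed simp
      have "card (words_of (grass_window a b) (2 * a + b)) =
        (if c = 0 then 0 else (c - 1 + a) choose a) + (if a = 0 then 0 else (c + (a - 1)) choose (a - 1))"
        unfolding b m card_words_grass_window_even[OF m] first second ..
      also have "\<dots> = (c + a) choose a"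
        using False choose_reduce_nat[of "c + a" a] by (auto simp: add_ac)
      finally show ?thesis using b by simp
    qed
  qed
qed

section \<open>The code of a Grassmannian element and its shape\<close>

lemma le_div3_iff: "m \<le> x div 3 \<longleftrightarrow> 3 * m \<le> (x::int)"
  by presburger

lemma div3_less_iff: "x div 3 < m \<longleftrightarrow> x < 3 * (m::int)"
  by presburger

lemma residue_rep_unique:
  "r \<in> {1, 2, 3} \<Longrightarrow> r' \<in> {1, 2, 3} \<Longrightarrow> r + 3 * m = r' + 3 * m' \<Longrightarrow> r = r' \<and> m = (m'::int)"
  by (elim insertE emptyE; presburger)

text \<open>The number of t < s with w t > w s, counted residue class by residue class:
  t = r + 3m lies in the range iff (w s - w r) div 3 < m \<le> (s - r - 1) div 3.\<close>
definition left_inversions :: "(int \<Rightarrow> int) \<Rightarrow> int \<Rightarrow> nat" where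
  "left_inversions w s = (\<Sum>r\<in>{1, 2, 3::int}. nat ((s - r - 1) div 3 - (w s - w r) div 3))"

lemma card_left_inversions:
  assumes per: "\<forall>i. w (i + 3) = w i + (3::int)"
  shows "card {t. t < s \<and> w s < w t} = left_inversions w s"
proof -
  define lo where "lo r = (w s - w r) div 3" for r
  define hi where "hi r = (s - r - 1) div 3" for r
  define pos where "pos = (\<lambda>(r, m). r + 3 * (m::int))"
  have member: "r + 3 * m < s \<and> w s < w (r + 3 * m) \<longleftrightarrow> lo r < m \<and> m \<le> hi r" for r m
    unfolding lo_def hi_def le_div3_iff div3_less_iff periodic_add_multiple[OF per] by auto
  have "{t. t < s \<and> w s < w t} = pos ` (SIGMA r:{1, 2, 3}. {lo r<..hi r})"
  proof (intro set_eqI iffI)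
    fix t assume t: "t \<in> {t. t < s \<and> w s < w t}"
    define r where "r = (t - 1) mod 3 + 1"
    define m where "m = (t - 1) div 3"
    have tr: "t = r + 3 * m" unfolding r_def m_def by simp
    have r: "r \<in> {1, 2, 3}" unfolding r_def using mod3_cases[of "t - 1"] by auto
    have "lo r < m" "m \<le> hi r" using t member[of r m] unfolding tr by auto
    then show "t \<in> pos ` (SIGMA r:{1, 2, 3}. {lo r<..hi r})"
      unfolding pos_def using r tr by (auto intro!: image_eqI[of _ _ "(r, m)"])
  next
    fix t assume "t \<in> pos ` (SIGMA r:{1, 2, 3}. {lo r<..hi r})"
    then obtain r m where "lo r < m" "m \<le> hi r" "t = r + 3 * m"
      unfolding pos_def by auto
    then show "t \<in> {t. t < s \<and> w s < w t}" using member[of r m] by simp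
  qed
  moreover have "inj_on pos (SIGMA r:{1, 2, 3}. {lo r<..hi r})"
  proof (rule inj_onI)
    fix p q assume p: "p \<in> (SIGMA r:{1, 2, 3}. {lo r<..hi r})" and q: "q \<in> (SIGMA r:{1, 2, 3}. {lo r<..hi r})"
      and eq: "pos p = pos q"
    obtain r m r' m' where pq: "p = (r, m)" "q = (r', m')" by (cases p, cases q)
    have "r \<in> {1, 2, 3}" "r' \<in> {1, 2, 3}" "r + 3 * m = r' + 3 * m'"
      using p q eq unfolding pq pos_def by auto
    then show "p = q" using residue_rep_unique[of r r' m m'] pq by simp
  qed
  ultimately have "card {t. t < s \<and> w s < w t} = card (SIGMA r:{1, 2, 3}. {lo r<..hi r})"
    using card_image by metis
  also have "\<dots> = (\<Sum>r\<in>{1, 2, 3}. card {lo r<..hi r})"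
    by (rule card_SigmaI) auto
  also have "\<dots> = left_inversions w s"
    unfolding left_inversions_def lo_def hi_def by simp
  finally show ?thesis .
qed


lemma left_inversions_shift:
  assumes per: "\<forall>i. w (i + 3) = w i + (3::int)"
  shows "left_inversions w s = left_inversions w ((s - 1) mod 3 + 1)"
proof -
  define s0 where "s0 = (s - 1) mod 3 + 1"
  define q where "q = (s - 1) div 3"
  have s: "s = s0 + 3 * q" unfolding s0_def q_def by simp
  have ws: "w s = w s0 + 3 * q" unfolding s by (rule periodic_add_multiple[OF per])
  have "(s - r - 1) div 3 - (w s - w r) div 3 = (s0 - r - 1) div 3 - (w s0 - w r) div 3" for r
  proof -
    have "(s - r - 1) div 3 = (s0 - r - 1) div 3 + q"
      unfolding s by (simp add: algebra_simps)
    moreover have "(w s - w r) div 3 = (w s0 - w r) div 3 + q"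
      unfolding ws by (simp add: algebra_simps)
    ultimately show ?thesis by simp
  qed
  then show ?thesis unfolding left_inversions_def s0_def by simp
qed

lemma code3_inv:
  assumes "bij w" and per: "\<forall>i. w (i + 3) = w i + (3::int)"
  shows "code3 (inv w) = map (\<lambda>i. left_inversions w (inv w i)) [1, 2, 3]"
proof -
  have "card {j. i < j \<and> inv w j < inv w i} = left_inversions w (inv w i)" for i
  proof -
    have inj: "inj w" and surj: "surj w" using assms(1) bij_is_inj bij_is_surj by auto
    have "{j. i < j \<and> inv w j < inv w i} = w ` {t. t < inv w i \<and> w (inv w i) < w t}"
    proof (intro set_eqI iffI)
      fix j assume "j \<in> {j. i < j \<and> inv w j < inv w i}"
      then show "j \<in> w ` {t. t < inv w i \<and> w (inv w i) < w t}"
        using surj by (intro image_eqI[of _ _ "inv w j"]) (auto simp: surj_f_inv_f)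
    next
      fix j assume "j \<in> w ` {t. t < inv w i \<and> w (inv w i) < w t}"
      then show "j \<in> {j. i < j \<and> inv w j < inv w i}"
        using inj surj by (auto simp: surj_f_inv_f inv_f_f)
    qed
    then have "card {j. i < j \<and> inv w j < inv w i} = card {t. t < inv w i \<and> w (inv w i) < w t}"
      using card_image[OF inj_on_subset[OF inj]] by simp
    then show ?thesis using card_left_inversions[OF per] by simp
  qed
  then show ?thesis unfolding code3_def by simp
qed

lemma distinct_residues_affine_perm:
  fixes w :: "int \<Rightarrow> int"
  assumes "inj w" and per: "\<forall>i. w (i + 3) = w i + (3::int)"
  shows "distinct_residues (w 1) (w 2) (w 3)"
proof -
  have same: "i = j" if ij: "i \<in> {1, 2, 3}" "j \<in> {1, 2, 3}" and eq: "w i mod 3 = w j mod 3" for i j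
  proof -
    from eq have "3 dvd w i - w j" by (simp only: mod_eq_dvd_iff)
    then obtain q where "w i - w j = 3 * q" by (elim dvdE)
    then have "w i = w (j + 3 * q)" using periodic_add_multiple[OF per] by simp
    then have "i + 3 * 0 = j + 3 * q" using assms(1) by (simp add: inj_eq)
    then show ?thesis using residue_rep_unique[OF ij] by blast
  qed
  show ?thesis
    unfolding distinct_residues_def using same[of 1 2] same[of 1 3] same[of 2 3] by auto
qed

lemma residue_positions_distinct:
  fixes w :: "int \<Rightarrow> int"
  assumes "surj w" and per: "\<forall>i. w (i + 3) = w i + (3::int)"
    and ij: "i \<in> {1, 2, 3}" "j \<in> {1, 2, 3}" and eq: "(inv w i - 1) mod 3 = (inv w j - 1) mod 3"
  shows "i = j"
proof -
  from eq have "3 dvd (inv w i - 1) - (inv w j - 1)" by (simp only: mod_eq_dvd_iff)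
  then obtain q where "inv w i - inv w j = 3 * q" by (auto elim: dvdE)
  then have "w (inv w i) = w (inv w j + 3 * q)" by (simp add: algebra_simps)
  then have "i + 3 * 0 = j + 3 * q" using assms(1) periodic_add_multiple[OF per] by (simp add: surj_f_inv_f)
  then show ?thesis using residue_rep_unique[OF ij] by blast
qed

lemma left_inversions_grassmannian:
  assumes lt: "w 1 < w 2" "w 2 < w 3" and d: "distinct_residues (w 1) (w 2) (w 3)"
  shows "left_inversions w 1 = nat ((w 2 - w 1) div 3) + nat ((w 3 - w 1) div 3)"
    and "left_inversions w 2 = nat ((w 3 - w 2) div 3)"
    and "left_inversions w 3 = 0"
proof -
  have neg: "-1 - (x - y) div 3 = (y - x) div (3::int)" if "x mod 3 \<noteq> y mod 3" for x y
    using that by presburger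
  have n: "w 1 mod 3 \<noteq> w 2 mod 3" "w 1 mod 3 \<noteq> w 3 mod 3" "w 2 mod 3 \<noteq> w 3 mod 3"
    using d distinct_residues_def by auto
  have p: "0 \<le> (w 2 - w 1) div 3" "0 \<le> (w 3 - w 1) div 3" "0 \<le> (w 3 - w 2) div 3"
    using lt by auto
  show "left_inversions w 1 = nat ((w 2 - w 1) div 3) + nat ((w 3 - w 1) div 3)"
    unfolding left_inversions_def using neg[OF n(1)] neg[OF n(2)] by simp
  show "left_inversions w 2 = nat ((w 3 - w 2) div 3)"
    unfolding left_inversions_def using neg[OF n(3)] p by simp
  show "left_inversions w 3 = 0"
    unfolding left_inversions_def using p by simp
qed

lemma rev_sort_permuted_triple:
  fixes f :: "int \<Rightarrow> nat"
  assumes "p1 \<in> {1, 2, 3}" "p2 \<in> {1, 2, 3}" "p3 \<in> {1, 2, 3}" "p1 \<noteq> p2" "p1 \<noteq> p3" "p2 \<noteq> p3"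
    and "f 3 \<le> f 2" "f 2 \<le> f 1"
  shows "rev (sort [f p1, f p2, f p3]) = [f 1, f 2, f 3]"
proof -
  have "[f p1, f p2, f p3] \<in> {[f 1, f 2, f 3], [f 1, f 3, f 2], [f 2, f 1, f 3], [f 2, f 3, f 1],
      [f 3, f 1, f 2], [f 3, f 2, f 1]}"
    using assms(1-6) by (elim insertE emptyE; simp)
  then show ?thesis using assms(7,8) by auto
qed

lemma conj_part_two_rows:
  assumes "q \<le> p"
  shows "conj_part [p, q, 0] = replicate q 2 @ replicate (p - q) (1::nat)"
proof -
  have M: "Max (set (0 # [p, q, 0])) = p" using assms by (simp add: max_def)
  show ?thesis unfolding conj_part_def M
  proof (rule nth_equalityI)
    show "length (map (\<lambda>k. length (filter ((\<le>) k) [p, q, 0])) [1..<Suc p]) =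
        length (replicate q 2 @ replicate (p - q) (1::nat))"
      using assms by simp
  next
    fix k assume "k < length (map (\<lambda>k. length (filter ((\<le>) k) [p, q, 0])) [1..<Suc p])"
    then have k: "k < p" by (simp only: length_map length_upt)
    then show "map (\<lambda>k. length (filter ((\<le>) k) [p, q, 0])) [1..<Suc p] ! k =
        (replicate q 2 @ replicate (p - q) (1::nat)) ! k"
      using assms by (simp add: nth_append; arith)
  qed
qed

lemma replicate_2_1_inj:
  assumes "replicate a 2 @ replicate b 1 = replicate a' 2 @ replicate b' (1::nat)"
  shows "a = a'" "b = b'"
proof -
  have "length (filter (\<lambda>x. x = 2) (replicate a 2 @ replicate b (1::nat))) =
      length (filter (\<lambda>x. x = 2) (replicate a' 2 @ replicate b' (1::nat)))"
    using assms by simp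
  then show "a = a'" by (simp add: filter_replicate)
  moreover have "length (replicate a 2 @ replicate b (1::nat)) = length (replicate a' 2 @ replicate b' (1::nat))"
    using assms by simp
  ultimately show "b = b'" by simp
qed

lemma lam_grassmannian:
  assumes "affine_perm3 w" and "affine_grassmannian w"
  shows "lam w = replicate (nat ((w 3 - w 2) div 3)) 2 @
    replicate (nat ((w 2 - w 1) div 3) + nat ((w 3 - w 1) div 3) - nat ((w 3 - w 2) div 3)) 1"
proof -
  from assms have bij: "bij w" and per: "\<forall>i. w (i + 3) = w i + 3"
    and lt: "w 1 < w 2" "w 2 < w 3"
    by (auto simp: affine_perm3_def affine_grassmannian_def)
  note L = left_inversions_grassmannian[OF lt distinct_residues_affine_perm[OF bij_is_inj[OF bij] per]]
  define pos where "pos i = (inv w i - 1) mod 3 + 1" for i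
  have pos_range: "pos i \<in> {1, 2, 3}" for i
    unfolding pos_def using mod3_cases[of "inv w i - 1"] by auto
  have pos_ne: "pos i \<noteq> pos j" if "i \<in> {1, 2, 3}" "j \<in> {1, 2, 3}" "i \<noteq> j" for i j
    using residue_positions_distinct[OF bij_is_surj[OF bij] per that(1,2)] that(3)
    unfolding pos_def by auto
  have code: "code3 (inv w) = [left_inversions w (pos 1), left_inversions w (pos 2), left_inversions w (pos 3)]"
    unfolding code3_inv[OF bij per] pos_def left_inversions_shift[OF per, of "inv w _"] by simp
  have "(w 3 - w 2) div 3 \<le> (w 3 - w 1) div 3"
    using lt by (intro zdiv_mono1) auto
  then have sorted: "left_inversions w 3 \<le> left_inversions w 2" "left_inversions w 2 \<le> left_inversions w 1"
    using L by linarith+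
  have "rev (sort (code3 (inv w))) = [left_inversions w 1, left_inversions w 2, left_inversions w 3]"
    unfolding code
    by (rule rev_sort_permuted_triple[OF pos_range pos_range pos_range], simp_all add: pos_ne sorted)
  then have "rev (sort (code3 (inv w))) =
      [nat ((w 2 - w 1) div 3) + nat ((w 3 - w 1) div 3), nat ((w 3 - w 2) div 3), 0]"
    using L by simp
  moreover have "nat ((w 3 - w 2) div 3) \<le> nat ((w 2 - w 1) div 3) + nat ((w 3 - w 1) div 3)"
    using sorted(2) L by simp
  ultimately show ?thesis
    unfolding lam_def by (simp add: conj_part_two_rows)
qed

text \<open>Conversely the shape determines the Grassmannian window: the differences x2 - x1 and
  x3 - x2 are 3(b div 2) + e and 3a + e with the same e in {1, 2}, and the sum is 6.\<close>
lemma grassmannian_window_eq: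
  fixes x1 x2 x3 :: int
  assumes lt: "x1 < x2" "x2 < x3" and d: "distinct_residues x1 x2 x3" and sum: "x1 + x2 + x3 = 6"
    and a: "nat ((x3 - x2) div 3) = a"
    and b: "nat ((x2 - x1) div 3) + nat ((x3 - x1) div 3) - nat ((x3 - x2) div 3) = b"
  shows "window x1 x2 x3 = grass_window a b"
proof -
  have nonzero: "(y - x) mod 3 \<noteq> 0" if "x mod 3 \<noteq> y mod 3" for x y :: int
    using that mod_eq_dvd_iff[of y 3 x] by (auto simp: dvd_eq_mod_eq_0)
  have n: "(x2 - x1) mod 3 \<noteq> 0" "(x3 - x1) mod 3 \<noteq> 0" "(x3 - x2) mod 3 \<noteq> 0"
    using d nonzero unfolding distinct_residues_def by auto
  define u e e' where "u = (x2 - x1) div 3" and "e = (x2 - x1) mod 3" and "e' = (x3 - x2) mod 3"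
  have u0: "0 \<le> u" unfolding u_def using lt by simp
  have d1: "x2 - x1 = 3 * u + e" unfolding u_def e_def by simp
  have d2: "x3 - x2 = 3 * int a + e'" unfolding e'_def a[symmetric] using lt by simp
  have e: "e = 1 \<or> e = 2" and e': "e' = 1 \<or> e' = 2"
    using n(1,3) mod3_cases[of "x2 - x1"] mod3_cases[of "x3 - x2"] unfolding e_def e'_def by auto
  have "e = e'"
  proof (rule ccontr)
    assume "e \<noteq> e'"
    then have "x3 - x1 = 3 * (u + int a + 1)" using d1 d2 e e' by auto
    then show False using n(2) by simp
  qed
  with e show ?thesis
  proof (elim disjE)
    assume e1: "e = 1"
    have "(x3 - x1) div 3 = u + int a" using d1 d2 \<open>e = e'\<close> e1 by simp
    then have "b = 2 * nat u" using b a u0 unfolding u_def[symmetric] by simp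
    then have "int b = 2 * u" "int (b div 2) = u" "int ((b + 1) div 2) = u" using u0 by simp_all
    then have "x1 = 1 - int a - int b" "x2 = 2 - int a + int (b div 2)" "x3 = 3 + 2 * int a + int ((b + 1) div 2)"
      using sum d1 d2 \<open>e = e'\<close> e1 by linarith+
    then show ?thesis unfolding grass_window_def by simp
  next
    assume e2: "e = 2"
    have "(x3 - x1) div 3 = u + int a + 1" using d1 d2 \<open>e = e'\<close> e2 by simp
    then have "b = 2 * nat u + 1" using b a u0 unfolding u_def[symmetric] by simp
    then have "int b = 2 * u + 1" "int (b div 2) = u" "int ((b + 1) div 2) = u + 1" using u0 by simp_all
    then have "x1 = 1 - int a - int b" "x2 = 2 - int a + int (b div 2)" "x3 = 3 + 2 * int a + int ((b + 1) div 2)"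
      using sum d1 d2 \<open>e = e'\<close> e2 by linarith+
    then show ?thesis unfolding grass_window_def by simp
  qed
qed

lemma grassmannian_eq_grass_window:
  assumes "affine_perm3 w" and "affine_grassmannian w"
    and "lam w = replicate a 2 @ replicate b 1"
  shows "w = grass_window a b"
proof -
  from assms(1,2) have bij: "bij w" and per: "\<forall>i. w (i + 3) = w i + 3"
    and sum: "w 1 + w 2 + w 3 = 6" and lt: "w 1 < w 2" "w 2 < w 3"
    by (auto simp: affine_perm3_def affine_grassmannian_def)
  note shape = replicate_2_1_inj[OF trans[OF lam_grassmannian[OF assms(1,2), symmetric] assms(3)]]
  have "window (w 1) (w 2) (w 3) = grass_window a b"
    by (rule grassmannian_window_eq[OF lt distinct_residues_affine_perm[OF bij_is_inj[OF bij] per] sum shape])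
  with periodic_eq_window[OF per] show ?thesis by (rule trans)
qed

text \<open>The Coxeter length of grass_window a b is 2a + b: the window length gives the lower bound
  and the nonzero number of words of that length gives the upper bound.\<close>
lemma reduced_words_grass_window:
  "reduced_words (grass_window a b) = words_of (grass_window a b) (2 * a + b)"
proof -
  let ?w = "grass_window a b"
  have "card (words_of ?w (2 * a + b)) \<noteq> 0"
    unfolding card_words_grass_window by simp
  then obtain ws where ws: "ws \<in> words_of ?w (2 * a + b)"
    by (metis card.empty ex_in_conv)
  have "affine_length ?w = 2 * a + b"
    unfolding affine_length_def
  proof (rule Least_equality)
    show "\<exists>ws. is_word ws \<and> length ws = 2 * a + b \<and> word_prod ws = ?w"
      using ws unfolding words_of_def by auto
  next
    fix n assume "\<exists>ws. is_word ws \<and> length ws = n \<and> word_prod ws = ?w"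
    then obtain ws where "length ws = n" "word_prod ws = ?w" by auto
    then show "2 * a + b \<le> n" using len_word_prod[of ws] len_grass_window[of a b] by simp
  qed
  then show ?thesis unfolding reduced_words_def words_of_def by simp
qed

lemma nat_floor_half_plus: "nat \<lfloor>real b / 2 + real a\<rfloor> = b div 2 + a"
proof -
  have "\<lfloor>real b / 2 + real a\<rfloor> = \<lfloor>real b / 2\<rfloor> + int a"
    using floor_add_int[of "real b / 2" "int a"] by simp
  also have "\<lfloor>real b / 2\<rfloor> = int (b div 2)"
    using floor_divide_of_nat_eq[of b 2] by simp
  finally show ?thesis by simp
qed

theorem proposition3p6:
  fixes a b :: nat and w :: "int \<Rightarrow> int"
  assumes "affine_perm3 w"
    and "affine_grassmannian w"
    and "lam w = replicate a 2 @ replicate b 1"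
  shows "card (reduced_words w) = nat \<lfloor>real b / 2 + real a\<rfloor> choose a"
proof -
  have "w = grass_window a b"
    using grassmannian_eq_grass_window[OF assms] .
  then have "card (reduced_words w) = card (words_of (grass_window a b) (2 * a + b))"
    by (simp add: reduced_words_grass_window)
  also have "\<dots> = (b div 2 + a) choose a"
    by (rule card_words_grass_window)
  finally show ?thesis
    unfolding nat_floor_half_plus .
qed

end
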